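(* Let $\tau$ be a tuple of positive integers, $0\le k\le \ell$, and $\hat P_\tau=C\sqcup O$ the $k$-decomposition. Let $F$ be a nonempty face of $\mathcal{O}_{C,O}(\tau)$ such that none of the nonnegativity inequalities $x_p\ge 0$ ($p\in C$) and none of the chain inequalities holds with equality at every point of $F$, let $\varphi$ be the partition of $O$ associated with $F$, and let $\pi=\varphi\cup\{\{c\}:c\in C\}$. Then the quotient poset $\hat P_\tau/\pi$ is of the form $\hat P_{\tau'}$ for some tuple $\tau'$ of positive integers; that is, after removing its minimum $\{\hat0\}$ and its maximum (the block containing $\hat1$), it is isomorphic to $P_{\tau'}$.
   Context: Let $\tau=(\tau_1,\dots,\tau_\ell)$ be positive integers. The poset $P_\tau$ has elements $y^i_j$ ($1\le i\le\ell$, $1\le j\le\tau_i$) with $y^i_j<y^{i'}_{j'}$ iff $i<i'$; $Y^i=\{y^i_1,\dots,y^i_{\tau_i}\}$; for a tuple $\tau'$ of positive integers $P_{\tau'}$ is defined in the same way (the empty tuple giving the empty poset). $\hat P_\tau=P_\tau\cup\{\hat0,\hat1\}$ with new minimum $\hat0$ and maximum $\hat1$, $Y^0=\{\hat0\}$, $Y^{\ell+1}=\{\hat1\}$; $\prec$ is the covering relation. The $k$-decomposition is $C=Y^0\cup\dots\cup Y^k$, $O=Y^{k+1}\cup\dots\cup Y^{\ell+1}$. The chain-order polytope $\mathcal{O}_{C,O}(\tau)\subseteq\mathbb{R}^{\hat P_\tau}$ consists of all $x$ with $x_{\hat0}=0$, $x_{\hat1}=1$, $x_p\ge0$ for $p\in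 C$ (nonnegativity inequalities), $x_a\le x_b$ for $a,b\in O$ with $a\prec b$ (order inequalities), and $x_{p_1}+\dots+x_{p_k}\le x_q$ for all $p_i\in Y^i$ ($1\le i\le k$), $q\in Y^{k+1}$ (chain inequalities). The partition $\varphi$ of $O$ associated with $F$ has as blocks the connected components of the graph with vertex set $O$ and edges $\{a,b\}$ for all $a\prec b$ in $O$ with $x_a=x_b$ for every $x\in F$. The quotient poset $\hat P_\tau/\pi$ is the set of blocks of $\pi$ ordered by the transitive closure of "$B\le B'$ iff $p\le q$ for some $p\in B$, $q\in B'$". *)

theory Defs
  imports Complex_Main
begin

text \<open>Elements of \<open>\<hat>P_\<tau>\<close> are pairs (level, index). Level 0 holds \<open>\<hat>0 = (0,1)\<close>,
  level \<open>i\<close> (1 \<le> i \<le> \<ell>) holds \<open>y^i_j = (i,j)\<close> for 1 \<le> j \<le> \<tau>_i,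
  level \<open>\<ell>+1\<close> holds \<open>\<hat>1 = (\<ell>+1,1)\<close>. The tuple \<open>\<tau>\<close> is a list, \<open>\<tau>_i = \<tau>!(i-1)\<close>.\<close>

type_synonym elt = "nat \<times> nat"

definition hatP :: "nat list \<Rightarrow> elt set" where
  "hatP \<tau> = {(0,1)} \<union> {(i,j). 1 \<le> i \<and> i \<le> length \<tau> \<and> 1 \<le> j \<and> j \<le> \<tau> ! (i - 1)}
             \<union> {(length \<tau> + 1, 1)}"

definition P :: "nat list \<Rightarrow> elt set" where
  "P \<tau> = {(i,j). 1 \<le> i \<and> i \<le> length \<tau> \<and> 1 \<le> j \<and> j \<le> \<tau> ! (i - 1)}"

definition bot0 :: elt where "bot0 = (0,1)"
definition top1 :: "nat list \<Rightarrow> elt" where "top1 \<tau> = (length \<tau> + 1, 1)"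

definition ple :: "elt \<Rightarrow> elt \<Rightarrow> bool" where
  "ple a b \<longleftrightarrow> a = b \<or> fst a < fst b"

definition plt :: "elt \<Rightarrow> elt \<Rightarrow> bool" where
  "plt a b \<longleftrightarrow> ple a b \<and> a \<noteq> b"

definition covers :: "nat list \<Rightarrow> elt \<Rightarrow> elt \<Rightarrow> bool" where
  "covers \<tau> a b \<longleftrightarrow> a \<in> hatP \<tau> \<and> b \<in> hatP \<tau> \<and> plt a b \<and>
     \<not> (\<exists>c\<in>hatP \<tau>. plt a c \<and> plt c b)"

definition Ylev :: "nat list \<Rightarrow> nat \<Rightarrow> elt set" where
  "Ylev \<tau> i = {p \<in> hatP \<tau>. fst p = i}"

definition Cset :: "nat list \<Rightarrow> nat \<Rightarrow> elt set" where
  "Cset \<tau> k = (\<Union>i\<in>{0..k}. Ylev \<tau> i)"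

definition Oset :: "nat list \<Rightarrow> nat \<Rightarrow> elt set" where
  "Oset \<tau> k = (\<Union>i\<in>{k+1..length \<tau> + 1}. Ylev \<tau> i)"

text \<open>Chains selecting one element from each of \<open>Y^1,\<dots>,Y^k\<close>: \<open>p_i = (i, c i)\<close>.\<close>
definition chain_sel :: "nat list \<Rightarrow> nat \<Rightarrow> (nat \<Rightarrow> nat) \<Rightarrow> bool" where
  "chain_sel \<tau> k c \<longleftrightarrow> (\<forall>i\<in>{1..k}. (i, c i) \<in> Ylev \<tau> i)"

text \<open>Points of \<open>\<real>^{\<hat>P_\<tau>}\<close> are functions vanishing outside \<open>\<hat>P_\<tau>\<close>.\<close>
definition chain_order_polytope :: "nat list \<Rightarrow> nat \<Rightarrow> (elt \<Rightarrow> real) set" where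
  "chain_order_polytope \<tau> k = {x.
     (\<forall>p. p \<notin> hatP \<tau> \<longrightarrow> x p = 0) \<and>
     x bot0 = 0 \<and> x (top1 \<tau>) = 1 \<and>
     (\<forall>p\<in>Cset \<tau> k. 0 \<le> x p) \<and>
     (\<forall>a\<in>Oset \<tau> k. \<forall>b\<in>Oset \<tau> k. covers \<tau> a b \<longrightarrow> x a \<le> x b) \<and>
     (\<forall>c q. chain_sel \<tau> k c \<and> q \<in> Ylev \<tau> (k+1) \<longrightarrow> (\<Sum>i=1..k. x (i, c i)) \<le> x q)}"

definition is_face :: "nat list \<Rightarrow> (elt \<Rightarrow> real) set \<Rightarrow> (elt \<Rightarrow> real) set \<Rightarrow> bool" where
  "is_face \<tau> Q F \<longleftrightarrow> (\<exists>a b. (\<forall>x\<in>Q. (\<Sum>p\<in>hatP \<tau>. a p * x p) \<le> b) \<and>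
       F = {x\<in>Q. (\<Sum>p\<in>hatP \<tau>. a p * x p) = b})"

definition face_edges :: "nat list \<Rightarrow> nat \<Rightarrow> (elt \<Rightarrow> real) set \<Rightarrow> elt rel" where
  "face_edges \<tau> k F = {(a,b). a \<in> Oset \<tau> k \<and> b \<in> Oset \<tau> k \<and> covers \<tau> a b \<and>
                                 (\<forall>x\<in>F. x a = x b)}"

definition assoc_partition :: "nat list \<Rightarrow> nat \<Rightarrow> (elt \<Rightarrow> real) set \<Rightarrow> elt set set" where
  "assoc_partition \<tau> k F =
     Oset \<tau> k // (((face_edges \<tau> k F \<union> (face_edges \<tau> k F)\<inverse>)\<^sup>*) \<inter> (Oset \<tau> k \<times> Oset \<tau> k))"

definition quot_le :: "elt set set \<Rightarrow> elt set rel" where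
  "quot_le \<pi> = {(B,B'). B \<in> \<pi> \<and> B' \<in> \<pi> \<and> (\<exists>p\<in>B. \<exists>q\<in>B'. ple p q)}\<^sup>+"

end

theory Submission
  imports Defs "HOL-Library.Disjoint_Sets" "HOL-Library.Infinite_Set"
begin

text \<open>Every point of the chain-order polytope is weakly increasing along the levels of \<open>O\<close>: the
  order inequalities join consecutive levels, and every level contains the element \<open>(i, 1)\<close>. Hence
  if all points of \<open>F\<close> agree at \<open>a, b \<in> O\<close> with \<open>a\<close> on a lower level than \<open>b\<close>, they agree on a
  chain of covering pairs through these elements, and \<open>a\<close>, \<open>b\<close> lie in one block of \<open>\<phi>\<close>. So two
  distinct blocks of \<open>\<phi>\<close> never interleave: every level of one is at most every level of the other.
  The singletons of \<open>C\<close> lie below \<open>O\<close>, so this holds for all blocks of \<open>\<pi>\<close>. Pairwise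
  non-interleaving blocks are ordered in the quotient exactly by the rank "least plus greatest
  level"; a finite ranked set with unique least and greatest element is \<open>\<hat>P\<^sub>\<tau>\<^sub>'\<close>, where \<open>\<tau>'\<close>
  lists the sizes of the intermediate rank classes.\<close>

lemma hatP_level_le: "p \<in> hatP \<tau> \<Longrightarrow> fst p \<le> length \<tau> + 1"
  unfolding hatP_def by auto

lemma hatP_level_0: "p \<in> hatP \<tau> \<Longrightarrow> fst p = 0 \<Longrightarrow> p = bot0"
  unfolding hatP_def bot0_def by auto

lemma hatP_level_top: "p \<in> hatP \<tau> \<Longrightarrow> fst p = length \<tau> + 1 \<Longrightarrow> p = top1 \<tau>"
  unfolding hatP_def top1_def by auto

lemma bot0_in_hatP: "bot0 \<in> hatP \<tau>"
  unfolding hatP_def bot0_def by simp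

lemma top1_in_hatP: "top1 \<tau> \<in> hatP \<tau>"
  unfolding hatP_def top1_def by simp

lemma level_first_in_hatP:
  assumes "\<forall>t\<in>set \<tau>. 0 < t" and "i \<le> length \<tau> + 1"
  shows "(i, 1) \<in> hatP \<tau>"
proof -
  have "0 < \<tau> ! (i - 1)" if "1 \<le> i" "i \<le> length \<tau>"
    using assms(1) that by simp
  then show ?thesis
    using assms(2) unfolding hatP_def by (cases "i = 0 \<or> i = length \<tau> + 1") auto
qed

lemma finite_hatP: "finite (hatP \<tau>)"
proof (rule finite_subset)
  have "\<tau> ! (i - 1) \<le> sum_list \<tau>" if "1 \<le> i" "i \<le> length \<tau>" for i
    using that by (simp add: elem_le_sum_list)
  then show "hatP \<tau> \<subseteq> {0..length \<tau> + 1} \<times> {0..sum_list \<tau> + 1}"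
    unfolding hatP_def by fastforce
qed simp

lemma plt_iff_level: "plt a b \<longleftrightarrow> fst a < fst b"
  unfolding plt_def ple_def by auto

lemma covers_iff:
  assumes "\<forall>t\<in>set \<tau>. 0 < t"
  shows "covers \<tau> a b \<longleftrightarrow> a \<in> hatP \<tau> \<and> b \<in> hatP \<tau> \<and> fst b = fst a + 1"
proof -
  have "\<exists>c\<in>hatP \<tau>. fst a < fst c \<and> fst c < fst b"
    if "b \<in> hatP \<tau>" "fst a < fst b" "fst b \<noteq> fst a + 1"
    using that level_first_in_hatP[OF assms, of "fst a + 1"] hatP_level_le[of b \<tau>]
    by (intro bexI[of _ "(fst a + 1, 1)"]) auto
  then show ?thesis
    unfolding covers_def plt_iff_level by fastforce
qed

lemma Oset_iff: "p \<in> Oset \<tau> k \<longleftrightarrow> p \<in> hatP \<tau> \<and> k < fst p"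
  unfolding Oset_def Ylev_def using hatP_level_le[of p \<tau>] by auto

lemma Cset_iff: "p \<in> Cset \<tau> k \<longleftrightarrow> p \<in> hatP \<tau> \<and> fst p \<le> k"
  unfolding Cset_def Ylev_def by auto

lemma hatP_map_upt:
  assumes "1 \<le> m" "n 0 = 1" "n m = 1"
  shows "hatP (map n [1..<m]) = (SIGMA i:{..m}. {1..n i})"
proof (intro set_eqI)
  fix p :: elt
  obtain i j where p: "p = (i, j)"
    by fastforce
  have "map n [1..<m] ! (i - 1) = n i" if "1 \<le> i" "i < m"
    using that by simp
  then show "p \<in> hatP (map n [1..<m]) \<longleftrightarrow> p \<in> (SIGMA i:{..m}. {1..n i})"
    using assms unfolding hatP_def p by (cases "i = 0"; cases "i = m") auto
qed

lemma ex_bij_betw_Sigma_enumerations: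
  assumes fin: "\<forall>i\<in>I. finite (A i)" and disj: "disjoint_family_on A I"
  obtains f where "bij_betw f (SIGMA i:I. {1..card (A i)}) (\<Union>i\<in>I. A i)"
    and "\<And>i j. (i, j) \<in> (SIGMA i:I. {1..card (A i)}) \<Longrightarrow> f (i, j) \<in> A i"
proof -
  have "\<forall>i\<in>I. \<exists>g. bij_betw g {1..card (A i)} (A i)"
    using fin ex_bij_betw_nat_finite_1 by blast
  then obtain g where g: "\<forall>i\<in>I. bij_betw (g i) {1..card (A i)} (A i)"
    by (rule bchoice[THEN exE])
  define f where "f p = g (fst p) (snd p)" for p
  have "bij_betw f ({i} \<times> {1..card (A i)}) (A i)" if "i \<in> I" for i
  proof -
    have "bij_betw snd ({i} \<times> {1..card (A i)}) {1..card (A i)}"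
      by (auto simp: bij_betw_def inj_on_def)
    then have "bij_betw (g i \<circ> snd) ({i} \<times> {1..card (A i)}) (A i)"
      using g that by (blast intro: bij_betw_trans)
    then show ?thesis
      by (rule bij_betw_cong[THEN iffD1, rotated]) (auto simp: f_def)
  qed
  then have "bij_betw f (\<Union>i\<in>I. {i} \<times> {1..card (A i)}) (\<Union>i\<in>I. A i)"
    by (rule bij_betw_UNION_disjoint[OF disj])
  moreover have "(\<Union>i\<in>I. {i} \<times> {1..card (A i)}) = (SIGMA i:I. {1..card (A i)})"
    by auto
  moreover have "f (i, j) \<in> A i" if "(i, j) \<in> (SIGMA i:I. {1..card (A i)})" for i j
    using that g bij_betwE unfolding f_def by fastforce
  ultimately show ?thesis
    using that by simp
qed

lemma ex_strict_mono_enumeration: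
  fixes V :: "'a::wellorder set"
  assumes "finite V" "V \<noteq> {}"
  obtains h and m :: nat where "V = h ` {..m}" "\<And>i j. i \<le> m \<Longrightarrow> j \<le> m \<Longrightarrow> h i < h j \<longleftrightarrow> i < j"
proof -
  obtain h where h: "bij_betw h {..<card V} V" and mono: "strict_mono_on {..<card V} h"
    using ex_bij_betw_strict_mono_card[OF assms(1)] by blast
  have "0 < card V"
    using assms by (simp add: card_gt_0_iff)
  then have "{..<card V} = {..card V - 1}"
    by auto
  then show ?thesis
    using that[of h "card V - 1"] h strict_mono_on_less[OF mono] by (simp add: bij_betw_def)
qed

lemma rank_levels_with_bot_top:
  fixes r :: "'a \<Rightarrow> nat"
  assumes fin: "finite S" and b: "b \<in> S" and t: "t \<in> S" and "b \<noteq> t"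
    and bot: "\<forall>s\<in>S. s \<noteq> b \<longrightarrow> r b < r s" and top: "\<forall>s\<in>S. s \<noteq> t \<longrightarrow> r s < r t"
  obtains h and m :: nat where "r ` S = h ` {..m}"
    "\<And>i j. i \<le> m \<Longrightarrow> j \<le> m \<Longrightarrow> h i < h j \<longleftrightarrow> i < j"
    "0 < m" "{s \<in> S. r s = h 0} = {b}" "{s \<in> S. r s = h m} = {t}"
proof -
  obtain h and m :: nat where levels: "r ` S = h ` {..m}"
    and h_less: "\<And>i j. i \<le> m \<Longrightarrow> j \<le> m \<Longrightarrow> h i < h j \<longleftrightarrow> i < j"
    using ex_strict_mono_enumeration[of "r ` S"] fin b by blast
  have "r b = h 0"
  proof -
    obtain j where "j \<le> m" "r b = h j"
      using levels b by (metis atMost_iff imageE imageI)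
    moreover obtain s where "s \<in> S" "h 0 = r s"
      using levels by (metis atMost_iff imageE imageI le0)
    then have "r b \<le> h 0"
      using bot by (cases "s = b") auto
    ultimately show ?thesis
      using h_less[of 0 j] by auto
  qed
  moreover have "r t = h m"
  proof -
    obtain j where "j \<le> m" "r t = h j"
      using levels t by (metis atMost_iff imageE imageI)
    moreover obtain s where "s \<in> S" "h m = r s"
      using levels by (metis atMost_iff imageE imageI order_refl)
    then have "h m \<le> r t"
      using top by (cases "s = t") auto
    ultimately show ?thesis
      using h_less[of j m] by (cases "j = m") auto
  qed
  moreover have "r b < r t"
    using bot t \<open>b \<noteq> t\<close> by auto
  ultimately have "0 < m"
    by (cases "m = 0") auto
  moreover have "{s \<in> S. r s = h 0} = {b}" "{s \<in> S. r s = h m} = {t}"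
    using \<open>r b = h 0\<close> \<open>r t = h m\<close> b t bot top by auto
  ultimately show ?thesis
    using that levels h_less by blast
qed

lemma ranked_set_iso_hatP:
  fixes r :: "'a \<Rightarrow> nat"
  assumes fin: "finite S" and "b \<in> S" "t \<in> S" "b \<noteq> t"
    and "\<forall>s\<in>S. s \<noteq> b \<longrightarrow> r b < r s" "\<forall>s\<in>S. s \<noteq> t \<longrightarrow> r s < r t"
  shows "\<exists>\<tau>'. (\<forall>x\<in>set \<tau>'. 0 < x) \<and> (\<exists>f. bij_betw f (hatP \<tau>') S \<and>
           (\<forall>a\<in>hatP \<tau>'. \<forall>c\<in>hatP \<tau>'. ple a c \<longleftrightarrow> a = c \<or> r (f a) < r (f c)))"
proof -
  obtain h and m :: nat where levels: "r ` S = h ` {..m}"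
    and h_less: "\<And>i j. i \<le> m \<Longrightarrow> j \<le> m \<Longrightarrow> h i < h j \<longleftrightarrow> i < j"
    and "0 < m" "{s \<in> S. r s = h 0} = {b}" "{s \<in> S. r s = h m} = {t}"
    using rank_levels_with_bot_top[OF assms] by blast
  define A where "A i = {s \<in> S. r s = h i}" for i
  have A_fin: "finite (A i)" for i
    unfolding A_def using fin by simp
  have A_ne: "A i \<noteq> {}" if "i \<le> m" for i
  proof -
    have "h i \<in> r ` S"
      using levels that by simp
    then show ?thesis
      unfolding A_def by force
  qed
  have A_disj: "disjoint_family_on A {..m}"
    unfolding disjoint_family_on_def A_def using h_less by (force simp: linorder_neq_iff)
  have S_eq: "(\<Union>i\<in>{..m}. A i) = S"
    using levels unfolding A_def by auto
  define \<tau>' where "\<tau>' = map (\<lambda>i. card (A i)) [1..<m]"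
  have hat: "hatP \<tau>' = (SIGMA i:{..m}. {1..card (A i)})"
    unfolding \<tau>'_def A_def using \<open>0 < m\<close> \<open>{s \<in> S. r s = h 0} = {b}\<close> \<open>{s \<in> S. r s = h m} = {t}\<close>
    by (intro hatP_map_upt) auto
  have "\<forall>x\<in>set \<tau>'. 0 < x"
    using A_ne A_fin unfolding \<tau>'_def by (auto simp: card_gt_0_iff)
  obtain f where f: "bij_betw f (SIGMA i:{..m}. {1..card (A i)}) (\<Union>i\<in>{..m}. A i)"
    and f_A: "\<And>i j. (i, j) \<in> (SIGMA i:{..m}. {1..card (A i)}) \<Longrightarrow> f (i, j) \<in> A i"
    using ex_bij_betw_Sigma_enumerations[OF _ A_disj] A_fin by blast
  have "fst p \<le> m" "r (f p) = h (fst p)" if "p \<in> hatP \<tau>'" for p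
    using that f_A unfolding hat A_def by (cases p; force)+
  then have "ple a c \<longleftrightarrow> a = c \<or> r (f a) < r (f c)" if "a \<in> hatP \<tau>'" "c \<in> hatP \<tau>'" for a c
    using that h_less unfolding ple_def by auto
  then show ?thesis
    using \<open>\<forall>x\<in>set \<tau>'. 0 < x\<close> f unfolding hat[symmetric] S_eq by blast
qed

definition interleaved :: "elt set \<Rightarrow> elt set \<Rightarrow> bool" where
  "interleaved B B' \<longleftrightarrow> (\<exists>a\<in>B. \<exists>b\<in>B'. fst a < fst b) \<and> (\<exists>a\<in>B'. \<exists>b\<in>B. fst a < fst b)"

text \<open>Non-interleaving blocks may share one boundary level, so neither their least nor their
  greatest level alone separates them; the sum does.\<close>

definition level_rank :: "elt set \<Rightarrow> nat" where
  "level_rank B = Min (fst ` B) + Max (fst ` B)"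

lemma level_rank_less_if_not_interleaved:
  assumes "finite B" "finite B'" "\<not> interleaved B B'" "p \<in> B" "q \<in> B'" "fst p < fst q"
  shows "level_rank B < level_rank B'"
proof -
  have "\<forall>a\<in>B'. \<forall>b\<in>B. fst b \<le> fst a"
    using assms(3-6) unfolding interleaved_def by (meson leI)
  moreover have "B \<noteq> {}" "B' \<noteq> {}"
    using assms by auto
  ultimately have "Max (fst ` B) \<le> Min (fst ` B')"
    using assms by simp
  moreover have "Min (fst ` B) \<le> fst p" "fst q \<le> Max (fst ` B')"
    using assms by (auto intro: Min_le Max_ge)
  ultimately show ?thesis
    using \<open>fst p < fst q\<close> unfolding level_rank_def by linarith
qed

lemma level_rank_lessD:
  assumes "finite B" "finite B'" "B \<noteq> {}" "B' \<noteq> {}" "level_rank B < level_rank B'"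
  shows "\<exists>p\<in>B. \<exists>q\<in>B'. fst p < fst q"
proof (rule ccontr)
  assume "\<not> ?thesis"
  then have "Max (fst ` B') \<le> Min (fst ` B)"
    using assms by (auto simp: not_less)
  moreover have "Min (fst ` B') \<le> Max (fst ` B')" "Min (fst ` B) \<le> Max (fst ` B)"
    using assms by (auto simp: Min_le_iff)
  ultimately show False
    using assms(5) unfolding level_rank_def by linarith
qed

lemma quot_le_eq_level_rank:
  assumes "disjoint \<P>" "\<forall>B\<in>\<P>. B \<noteq> {} \<and> finite B"
    and "\<forall>B\<in>\<P>. \<forall>B'\<in>\<P>. interleaved B B' \<longrightarrow> B = B'"
  shows "quot_le \<P> = {(B, B'). B \<in> \<P> \<and> B' \<in> \<P> \<and> (B = B' \<or> level_rank B < level_rank B')}"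
proof -
  have "(\<exists>p\<in>B. \<exists>q\<in>B'. ple p q) \<longleftrightarrow> B = B' \<or> level_rank B < level_rank B'"
    if "B \<in> \<P>" "B' \<in> \<P>" for B B'
  proof
    assume "\<exists>p\<in>B. \<exists>q\<in>B'. ple p q"
    then obtain p q where "p \<in> B" "q \<in> B'" "p = q \<or> fst p < fst q"
      unfolding ple_def by blast
    then show "B = B' \<or> level_rank B < level_rank B'"
      using assms that level_rank_less_if_not_interleaved[of B B' p q]
      by (metis disjointD disjoint_iff)
  next
    assume "B = B' \<or> level_rank B < level_rank B'"
    then show "\<exists>p\<in>B. \<exists>q\<in>B'. ple p q"
      using assms(2) that level_rank_lessD[of B B'] unfolding ple_def by blast
  qed
  then have "{(B, B'). B \<in> \<P> \<and> B' \<in> \<P> \<and> (\<exists>p\<in>B. \<exists>q\<in>B'. ple p q)} =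
      {(B, B'). B \<in> \<P> \<and> B' \<in> \<P> \<and> (B = B' \<or> level_rank B < level_rank B')}"
    by blast
  moreover have "trans {(B, B'). B \<in> \<P> \<and> B' \<in> \<P> \<and> (B = B' \<or> level_rank B < level_rank B')}"
    by (auto intro!: transI)
  ultimately show ?thesis
    unfolding quot_le_def by simp
qed

lemma partition_on_hatP_blocks:
  assumes "partition_on (hatP \<tau>) \<P>" "B \<in> \<P>"
  shows "B \<noteq> {}" "B \<subseteq> hatP \<tau>" "finite B"
  using assms partition_onD1[OF assms(1)] partition_onD3[OF assms(1)] finite_hatP
  by (auto intro: finite_subset)

lemma level_rank_bot_least:
  assumes part: "partition_on (hatP \<tau>) \<P>"
    and sep: "\<forall>B\<in>\<P>. \<forall>B'\<in>\<P>. interleaved B B' \<longrightarrow> B = B'"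
    and bot: "{bot0} \<in> \<P>" and B: "B \<in> \<P>" "B \<noteq> {bot0}"
  shows "level_rank {bot0} < level_rank B"
proof -
  obtain q where "q \<in> B" "q \<noteq> bot0"
    using partition_on_hatP_blocks(1)[OF part B(1)]
      disjointD[OF partition_onD2[OF part] bot B(1)] B(2) by blast
  moreover have "q \<in> hatP \<tau>"
    using partition_on_hatP_blocks(2)[OF part B(1)] \<open>q \<in> B\<close> by blast
  ultimately have "fst bot0 < fst q"
    using hatP_level_0 by (fastforce simp: bot0_def)
  then show ?thesis
    using level_rank_less_if_not_interleaved[of "{bot0}" B bot0 q] sep bot B \<open>q \<in> B\<close>
      partition_on_hatP_blocks(3)[OF part B(1)] by auto
qed

lemma level_rank_top_greatest:
  assumes part: "partition_on (hatP \<tau>) \<P>"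
    and sep: "\<forall>B\<in>\<P>. \<forall>B'\<in>\<P>. interleaved B B' \<longrightarrow> B = B'"
    and T: "T \<in> \<P>" "top1 \<tau> \<in> T" and B: "B \<in> \<P>" "B \<noteq> T"
  shows "level_rank B < level_rank T"
proof -
  obtain p where "p \<in> B" "p \<noteq> top1 \<tau>"
    using partition_on_hatP_blocks(1)[OF part B(1)]
      disjointD[OF partition_onD2[OF part] T(1) B(1)] B(2) T(2) by blast
  moreover have "p \<in> hatP \<tau>"
    using partition_on_hatP_blocks(2)[OF part B(1)] \<open>p \<in> B\<close> by blast
  ultimately have "fst p < fst (top1 \<tau>)"
    using hatP_level_le[of p \<tau>] hatP_level_top[of p \<tau>]
    by (cases "fst p = length \<tau> + 1") (auto simp: top1_def)
  then show ?thesis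
    using level_rank_less_if_not_interleaved[of B T p "top1 \<tau>"] sep T B \<open>p \<in> B\<close>
      partition_on_hatP_blocks(3)[OF part] by auto
qed

lemma quotient_iso_hatP:
  assumes part: "partition_on (hatP \<tau>) \<P>" and bot: "{bot0} \<in> \<P>"
    and sep: "\<forall>B\<in>\<P>. \<forall>B'\<in>\<P>. interleaved B B' \<longrightarrow> B = B'"
  shows "\<exists>\<tau>'. (\<forall>t\<in>set \<tau>'. 0 < t) \<and>
           (\<exists>f. bij_betw f (hatP \<tau>') \<P> \<and>
                (\<forall>a\<in>hatP \<tau>'. \<forall>b\<in>hatP \<tau>'. ple a b \<longleftrightarrow> (f a, f b) \<in> quot_le \<P>))"
proof -
  obtain T where T: "T \<in> \<P>" "top1 \<tau> \<in> T"
    using partition_onD1[OF part] top1_in_hatP by blast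
  have "{bot0} \<noteq> T"
    using T by (auto simp: bot0_def top1_def)
  obtain \<tau>' f where "\<forall>t\<in>set \<tau>'. 0 < t" and f: "bij_betw f (hatP \<tau>') \<P>"
    and f_ord: "\<forall>a\<in>hatP \<tau>'. \<forall>c\<in>hatP \<tau>'. ple a c \<longleftrightarrow> a = c \<or> level_rank (f a) < level_rank (f c)"
    using ranked_set_iso_hatP[OF finite_elements[OF finite_hatP part] bot T(1) \<open>{bot0} \<noteq> T\<close>]
      level_rank_bot_least[OF part sep bot] level_rank_top_greatest[OF part sep T]
    by blast
  have quot: "quot_le \<P> = {(B, B'). B \<in> \<P> \<and> B' \<in> \<P> \<and> (B = B' \<or> level_rank B < level_rank B')}"
    using partition_on_hatP_blocks[OF part]
    by (intro quot_le_eq_level_rank[OF partition_onD2[OF part] _ sep]) blast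
  have "ple a c \<longleftrightarrow> (f a, f c) \<in> quot_le \<P>" if "a \<in> hatP \<tau>'" "c \<in> hatP \<tau>'" for a c
  proof -
    have "(f a, f c) \<in> quot_le \<P> \<longleftrightarrow> f a = f c \<or> level_rank (f a) < level_rank (f c)"
      unfolding quot using bij_betw_apply[OF f that(1)] bij_betw_apply[OF f that(2)] by simp
    moreover have "f a = f c \<longleftrightarrow> a = c"
      using inj_on_eq_iff[OF bij_betw_imp_inj_on[OF f] that] .
    ultimately show ?thesis
      using f_ord that by simp
  qed
  then show ?thesis
    using \<open>\<forall>t\<in>set \<tau>'. 0 < t\<close> f by blast
qed

lemma chain_order_polytope_covers:
  assumes "x \<in> chain_order_polytope \<tau> k" "a \<in> Oset \<tau> k" "b \<in> Oset \<tau> k" "covers \<tau> a b"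
  shows "x a \<le> x b"
  using assms unfolding chain_order_polytope_def by blast

lemma Oset_level_induct:
  assumes pos: "\<forall>t\<in>set \<tau>. 0 < t"
    and cover: "\<And>a b. a \<in> Oset \<tau> k \<Longrightarrow> b \<in> Oset \<tau> k \<Longrightarrow> covers \<tau> a b \<Longrightarrow> R a b"
    and step: "\<And>a b c. a \<in> Oset \<tau> k \<Longrightarrow> b \<in> Oset \<tau> k \<Longrightarrow> c \<in> Oset \<tau> k \<Longrightarrow>
                 fst a < fst b \<Longrightarrow> fst b < fst c \<Longrightarrow> R a b \<Longrightarrow> R b c \<Longrightarrow> R a c"
    and a: "a \<in> Oset \<tau> k"
  shows "b \<in> Oset \<tau> k \<Longrightarrow> fst a < fst b \<Longrightarrow> R a b"
proof (induction "fst b" arbitrary: b rule: less_induct)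
  case less
  show ?case
  proof (cases "fst b = fst a + 1")
    case True
    then show ?thesis
      using a less.prems cover covers_iff[OF pos] by (simp add: Oset_iff)
  next
    case False
    define c where "c = (fst b - 1, 1::nat)"
    have "c \<in> Oset \<tau> k"
      using a less.prems False level_first_in_hatP[OF pos, of "fst b - 1"] hatP_level_le[of b \<tau>]
      unfolding c_def Oset_iff by auto
    moreover have "covers \<tau> c b"
      using calculation less.prems covers_iff[OF pos] unfolding c_def Oset_iff by auto
    ultimately show ?thesis
      using a less False step[of a c b] cover[of c b] unfolding c_def by auto
  qed
qed

lemma chain_order_polytope_mono:
  assumes "\<forall>t\<in>set \<tau>. 0 < t" "x \<in> chain_order_polytope \<tau> k"
    and "p \<in> Oset \<tau> k" "q \<in> Oset \<tau> k" "fst p < fst q"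
  shows "x p \<le> x q"
  by (rule Oset_level_induct[OF assms(1), where R = "\<lambda>p q. x p \<le> x q"])
    (use assms chain_order_polytope_covers in auto)

definition face_connected :: "nat list \<Rightarrow> nat \<Rightarrow> (elt \<Rightarrow> real) set \<Rightarrow> elt rel" where
  "face_connected \<tau> k F =
     (face_edges \<tau> k F \<union> (face_edges \<tau> k F)\<inverse>)\<^sup>* \<inter> (Oset \<tau> k \<times> Oset \<tau> k)"

lemma assoc_partition_eq_quotient: "assoc_partition \<tau> k F = Oset \<tau> k // face_connected \<tau> k F"
  unfolding assoc_partition_def face_connected_def ..

lemma equiv_face_connected: "equiv (Oset \<tau> k) (face_connected \<tau> k F)"
proof (rule equivI)
  let ?E = "face_edges \<tau> k F \<union> (face_edges \<tau> k F)\<inverse>"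
  have "sym (?E\<^sup>*)"
    by (simp add: sym_Un_converse sym_rtrancl)
  then show "sym (face_connected \<tau> k F)"
    unfolding face_connected_def by (auto intro: symI dest: symD)
  show "trans (face_connected \<tau> k F)"
    unfolding face_connected_def by (auto intro!: transI)
qed (auto simp: face_connected_def refl_on_def)

lemma face_connected_imp_eq:
  assumes "(a, b) \<in> face_connected \<tau> k F" "x \<in> F"
  shows "x a = x b"
proof -
  have "(a, b) \<in> (face_edges \<tau> k F \<union> (face_edges \<tau> k F)\<inverse>)\<^sup>*"
    using assms(1) unfolding face_connected_def by blast
  then show ?thesis
    by induction (use assms(2) in \<open>auto simp: face_edges_def\<close>)
qed

lemma face_connected_if_eq:
  assumes pos: "\<forall>t\<in>set \<tau>. 0 < t" and F: "F \<subseteq> chain_order_polytope \<tau> k"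
    and "a \<in> Oset \<tau> k" "b \<in> Oset \<tau> k" "fst a < fst b" "\<forall>x\<in>F. x a = x b"
  shows "(a, b) \<in> face_connected \<tau> k F"
proof -
  let ?E = "face_edges \<tau> k F \<union> (face_edges \<tau> k F)\<inverse>"
  have "(\<forall>x\<in>F. x a = x b) \<longrightarrow> (a, b) \<in> ?E\<^sup>*"
  proof (rule Oset_level_induct[OF pos _ _ \<open>a \<in> Oset \<tau> k\<close> \<open>b \<in> Oset \<tau> k\<close> \<open>fst a < fst b\<close>])
    show "(\<forall>x\<in>F. x p = x q) \<longrightarrow> (p, q) \<in> ?E\<^sup>*"
      if "p \<in> Oset \<tau> k" "q \<in> Oset \<tau> k" "covers \<tau> p q" for p q
      using that unfolding face_edges_def by blast
    show "(\<forall>x\<in>F. x p = x r) \<longrightarrow> (p, r) \<in> ?E\<^sup>*"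
      if "p \<in> Oset \<tau> k" "q \<in> Oset \<tau> k" "r \<in> Oset \<tau> k" "fst p < fst q" "fst q < fst r"
        and "(\<forall>x\<in>F. x p = x q) \<longrightarrow> (p, q) \<in> ?E\<^sup>*" "(\<forall>x\<in>F. x q = x r) \<longrightarrow> (q, r) \<in> ?E\<^sup>*"
      for p q r
    proof
      assume eq: "\<forall>x\<in>F. x p = x r"
      have "x p \<le> x q" "x q \<le> x r" if "x \<in> F" for x
        using that F chain_order_polytope_mono[OF pos] \<open>p \<in> Oset \<tau> k\<close> \<open>q \<in> Oset \<tau> k\<close>
          \<open>r \<in> Oset \<tau> k\<close> \<open>fst p < fst q\<close> \<open>fst q < fst r\<close> by blast+
      then have "\<forall>x\<in>F. x p = x q" "\<forall>x\<in>F. x q = x r"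
        using eq by (metis order.antisym)+
      then show "(p, r) \<in> ?E\<^sup>*"
        using that(6,7) by (meson rtrancl_trans)
    qed
  qed
  then show ?thesis
    using assms unfolding face_connected_def by blast
qed

lemma assoc_partition_not_interleaved:
  assumes pos: "\<forall>t\<in>set \<tau>. 0 < t" and F: "F \<subseteq> chain_order_polytope \<tau> k"
    and B: "B \<in> assoc_partition \<tau> k F" and B': "B' \<in> assoc_partition \<tau> k F"
    and "interleaved B B'"
  shows "B = B'"
proof -
  note eqv = equiv_face_connected[of \<tau> k F]
  note B_quot = B[unfolded assoc_partition_eq_quotient]
    and B'_quot = B'[unfolded assoc_partition_eq_quotient]
  obtain a b' a' b where ab': "a \<in> B" "b' \<in> B'" "fst a < fst b'"
    and a'b: "a' \<in> B'" "b \<in> B" "fst a' < fst b"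
    using \<open>interleaved B B'\<close> unfolding interleaved_def by blast
  have in_O: "a \<in> Oset \<tau> k" "b \<in> Oset \<tau> k" "a' \<in> Oset \<tau> k" "b' \<in> Oset \<tau> k"
    using ab' a'b in_quotient_imp_subset[OF eqv] B_quot B'_quot by blast+
  have "x a = x b'" if "x \<in> F" for x
  proof -
    have "x a = x b" "x a' = x b'"
      using quotient_eq_iff[OF eqv B_quot B_quot] quotient_eq_iff[OF eqv B'_quot B'_quot]
        ab' a'b face_connected_imp_eq that by blast+
    moreover have "x a \<le> x b'" "x a' \<le> x b"
      using chain_order_polytope_mono[OF pos] F that in_O ab' a'b by blast+
    ultimately show ?thesis by linarith
  qed
  then have "(a, b') \<in> face_connected \<tau> k F"
    using face_connected_if_eq[OF pos F] in_O ab' by blast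
  then show ?thesis
    using quotient_eq_iff[OF eqv B_quot B'_quot] ab' by blast
qed

lemma partition_on_quotient_poset:
  "partition_on (hatP \<tau>) (assoc_partition \<tau> k F \<union> {{c} | c. c \<in> Cset \<tau> k})"
proof -
  have "partition_on (Oset \<tau> k) (assoc_partition \<tau> k F)"
    unfolding assoc_partition_eq_quotient by (rule partition_on_quotient[OF equiv_face_connected])
  moreover have "{{c} | c. c \<in> Cset \<tau> k} = (\<lambda>c. {c}) ` Cset \<tau> k"
    by blast
  then have "partition_on (Cset \<tau> k) {{c} | c. c \<in> Cset \<tau> k}"
    by (simp add: partition_on_singletons)
  moreover have "hatP \<tau> = Oset \<tau> k \<union> Cset \<tau> k" "Oset \<tau> k \<inter> Cset \<tau> k = {}"
    by (auto simp: Oset_iff Cset_iff)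
  ultimately show ?thesis
    unfolding partition_on_def
    using disjoint_union[of "assoc_partition \<tau> k F" "{{c} | c. c \<in> Cset \<tau> k}"] by auto
qed

lemma quotient_poset_not_interleaved:
  assumes pos: "\<forall>t\<in>set \<tau>. 0 < t" and F: "F \<subseteq> chain_order_polytope \<tau> k"
    and B: "B \<in> assoc_partition \<tau> k F \<union> {{c} | c. c \<in> Cset \<tau> k}"
    and B': "B' \<in> assoc_partition \<tau> k F \<union> {{c} | c. c \<in> Cset \<tau> k}"
    and "interleaved B B'"
  shows "B = B'"
proof -
  have O_blocks: "B \<subseteq> Oset \<tau> k" if "B \<in> assoc_partition \<tau> k F" for B
    using that in_quotient_imp_subset[OF equiv_face_connected]
    unfolding assoc_partition_eq_quotient by blast
  have no_singleton: False
    if "B \<in> assoc_partition \<tau> k F \<union> {{c} | c. c \<in> Cset \<tau> k}" "c \<in> Cset \<tau> k" "interleaved {c} B"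
    for B c
  proof -
    obtain a b where "a \<in> B" "b \<in> B" "fst a < fst c" "fst c < fst b"
      using \<open>interleaved {c} B\<close> unfolding interleaved_def by blast
    moreover have "a \<notin> Oset \<tau> k"
      using \<open>c \<in> Cset \<tau> k\<close> \<open>fst a < fst c\<close> by (auto simp: Oset_iff Cset_iff)
    ultimately show False
      using that(1) O_blocks by auto
  qed
  show ?thesis
    using B B' \<open>interleaved B B'\<close> assoc_partition_not_interleaved[OF pos F]
      no_singleton[OF B] no_singleton[OF B'] unfolding interleaved_def by blast
qed

theorem lemma3p5:
  fixes \<tau> :: "nat list" and k :: nat and F :: "(elt \<Rightarrow> real) set"
  assumes tau_pos: "\<forall>t\<in>set \<tau>. 0 < t"
    and k_le: "k \<le> length \<tau>"
    and face: "is_face \<tau> (chain_order_polytope \<tau> k) F"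
    and nonempty: "F \<noteq> {}"
    and no_nonneg_tight: "\<forall>p\<in>Cset \<tau> k - {bot0}. \<not> (\<forall>x\<in>F. x p = 0)"
    and no_chain_tight: "\<forall>c q. chain_sel \<tau> k c \<and> q \<in> Ylev \<tau> (k+1) \<longrightarrow>
                           \<not> (\<forall>x\<in>F. (\<Sum>i=1..k. x (i, c i)) = x q)"
  shows "\<exists>\<tau>' :: nat list. (\<forall>t\<in>set \<tau>'. 0 < t) \<and>
           (\<exists>f. bij_betw f (hatP \<tau>')
                  (assoc_partition \<tau> k F \<union> {{c} | c. c \<in> Cset \<tau> k}) \<and>
                (\<forall>a\<in>hatP \<tau>'. \<forall>b\<in>hatP \<tau>'. ple a b \<longleftrightarrow>
                   (f a, f b) \<in> quot_le (assoc_partition \<tau> k F \<union> {{c} | c. c \<in> Cset \<tau> k})))"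
proof (rule quotient_iso_hatP[OF partition_on_quotient_poset])
  have "F \<subseteq> chain_order_polytope \<tau> k"
    using face unfolding is_face_def by blast
  then show "\<forall>B\<in>assoc_partition \<tau> k F \<union> {{c} | c. c \<in> Cset \<tau> k}.
      \<forall>B'\<in>assoc_partition \<tau> k F \<union> {{c} | c. c \<in> Cset \<tau> k}. interleaved B B' \<longrightarrow> B = B'"
    using quotient_poset_not_interleaved[OF tau_pos] by blast
  have "bot0 \<in> Cset \<tau> k"
    using bot0_in_hatP[of \<tau>] unfolding Cset_iff bot0_def by simp
  then show "{bot0} \<in> assoc_partition \<tau> k F \<union> {{c} | c. c \<in> Cset \<tau> k}"
    by blast
qed

end
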